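(* Let $0\le d\le N$ be integers. If $d=0$ or $d=N$ then $\dim\Lambda_{N,d}=0$; otherwise $\dim\Lambda_{N,d}=(d-1)(N-d-1)$.
   Context: For integers $0\le d\le N$, $\Lambda_{N,d}\subseteq\mathbb{R}^{d\times(N+1)}$ denotes the set of real matrices $\lambda=(\lambda_{i,n})$, with rows indexed by $1\le i\le d$ and columns indexed by $0\le n\le N$, satisfying: $\lambda_{i,0}=0$ for $1\le i\le d$; $\lambda_{i,N}=N$ for $1\le i\le d$; $\sum_{i=1}^d\lambda_{i,n}=dn$ for $0\le n\le N$; $\lambda_{i,n}\le\lambda_{i,n+1}$ for $1\le i\le d$, $0\le n<N$; $\lambda_{i,n}\le\lambda_{i-1,n-1}$ for $1<i\le d$, $0<n\le N$. (For $d=0$ this is the single empty $0\times(N+1)$ matrix.) The dimension of a polytope is the dimension of its affine hull. *)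

theory Defs
  imports "HOL-Analysis.Analysis" "HOL-Library.Function_Algebras"
begin

text \<open>Real d x (N+1) matrices are encoded as functions on index pairs (i,n)
  (row i, column n), required to vanish outside the index range
  1 \<le> i \<le> d, 0 \<le> n \<le> N, so that the space is canonically R^(d(N+1)).\<close>

type_synonym mat = "nat \<times> nat \<Rightarrow> real"

definition mscale :: "real \<Rightarrow> mat \<Rightarrow> mat" where
  "mscale c f = (\<lambda>p. c * f p)"

definition Lambda :: "nat \<Rightarrow> nat \<Rightarrow> mat set" where
  "Lambda N d = {l.
     (\<forall>i n. \<not> (1 \<le> i \<and> i \<le> d \<and> n \<le> N) \<longrightarrow> l (i, n) = 0) \<and>
     (\<forall>i. 1 \<le> i \<and> i \<le> d \<longrightarrow> l (i, 0) = 0) \<and>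
     (\<forall>i. 1 \<le> i \<and> i \<le> d \<longrightarrow> l (i, N) = real N) \<and>
     (\<forall>n \<le> N. (\<Sum>i=1..d. l (i, n)) = real d * real n) \<and>
     (\<forall>i n. 1 \<le> i \<and> i \<le> d \<and> n < N \<longrightarrow> l (i, n) \<le> l (i, Suc n)) \<and>
     (\<forall>i n. 1 < i \<and> i \<le> d \<and> 0 < n \<and> n \<le> N \<longrightarrow> l (i, n) \<le> l (i - 1, n - 1))}"

definition affine_dim :: "mat set \<Rightarrow> int" where
  "affine_dim S = (if S = {} then -1
     else int (vector_space.dim mscale ((\<lambda>x. x - (SOME a. a \<in> S)) ` S)))"

end

theory Submission
  imports Defs
begin

text \<open>Chaining the row and diagonal inequalities back to the first column forces every entry
  with n < i to be 0; chaining them forward to the last column forces every entry with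
  N + i \<le> n + d to be N. Hence all differences of points of \<open>Lambda N d\<close> lie in the space T of
  matrices supported on the remaining free cells and having zero column sums. In column n the
  free rows form an interval starting at the pivot row max 1 (n + d + 1 - N), so T has a basis
  indexed by the free cells off the pivot rows, of which there are (d - 1)(N - d - 1).
  Conversely, \<open>Lambda N d\<close> contains an explicit point at which every inequality involving a free
  cell is strict, so it can be moved a little in every direction of T; the affine hull of
  \<open>Lambda N d\<close> is therefore a translate of T.\<close>

interpretation M: vector_space mscale
  by unfold_locales (auto simp: mscale_def fun_eq_iff algebra_simps)

lemma sum_fun_apply: "(\<Sum>g\<in>A. f g) p = (\<Sum>g\<in>A. (f g p :: real))"
  by (induction A rule: infinite_finite_induct) auto

lemma affine_dim_eq_dim:
  assumes "S \<noteq> {}"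
    and diff_in: "\<And>x y. x \<in> S \<Longrightarrow> y \<in> S \<Longrightarrow> x - y \<in> T"
    and T_diffs: "T \<subseteq> M.span {x - y | x y. x \<in> S \<and> y \<in> S}"
  shows "affine_dim S = int (M.dim T)"
proof -
  define a where "a = (SOME a. a \<in> S)"
  define V where "V = (\<lambda>x. x - a) ` S"
  have a: "a \<in> S" unfolding a_def using assms(1) by (simp add: some_in_eq)
  have "V \<subseteq> T" using diff_in a by (auto simp: V_def)
  have diffs: "{x - y | x y. x \<in> S \<and> y \<in> S} \<subseteq> M.span V"
  proof clarify
    fix x y assume "x \<in> S" "y \<in> S"
    hence "x - a \<in> M.span V" "y - a \<in> M.span V" by (auto simp: V_def intro: M.span_base)
    hence "(x - a) - (y - a) \<in> M.span V" by (rule M.span_diff)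
    thus "x - y \<in> M.span V" by simp
  qed
  have "T \<subseteq> M.span V"
    using T_diffs M.span_minimal[OF diffs M.subspace_span] by (rule order_trans)
  hence "M.span V = M.span T"
    using M.span_mono[OF \<open>V \<subseteq> T\<close>] M.span_minimal[OF _ M.subspace_span] by blast
  hence "M.dim V = M.dim T" by (metis M.dim_span)
  thus ?thesis using assms(1) by (simp add: affine_dim_def V_def a_def)
qed

section \<open>Entries forced by the defining inequalities\<close>

lemma
  assumes "l \<in> Lambda N d"
  shows Lambda_outside: "\<not> (1 \<le> i \<and> i \<le> d \<and> n \<le> N) \<Longrightarrow> l (i, n) = 0"
    and Lambda_first_col: "1 \<le> i \<Longrightarrow> i \<le> d \<Longrightarrow> l (i, 0) = 0"
    and Lambda_last_col: "1 \<le> i \<Longrightarrow> i \<le> d \<Longrightarrow> l (i, N) = real N"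
    and Lambda_col_sum: "n \<le> N \<Longrightarrow> (\<Sum>i=1..d. l (i, n)) = real d * real n"
    and Lambda_row_step: "1 \<le> i \<Longrightarrow> i \<le> d \<Longrightarrow> n < N \<Longrightarrow> l (i, n) \<le> l (i, Suc n)"
    and Lambda_diag_step:
      "1 < i \<Longrightarrow> i \<le> d \<Longrightarrow> 0 < n \<Longrightarrow> n \<le> N \<Longrightarrow> l (i, n) \<le> l (i - 1, n - 1)"
  using assms unfolding Lambda_def by auto

lemma Lambda_row_mono:
  assumes "l \<in> Lambda N d" "1 \<le> i" "i \<le> d" "m \<le> n" "n \<le> N"
  shows "l (i, m) \<le> l (i, n)"
  using assms(4,5)
proof (induction rule: dec_induct)
  case (step k)
  with Lambda_row_step[OF assms(1-3), of k] show ?case by simp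
qed simp

lemma Lambda_diag_antimono:
  assumes "l \<in> Lambda N d" "1 \<le> i" "i + k \<le> d" "n + k \<le> N"
  shows "l (i + k, n + k) \<le> l (i, n)"
  using assms(3,4)
proof (induction k)
  case (Suc k)
  with Lambda_diag_step[OF assms(1), of "i + Suc k" "n + Suc k"] assms(2) show ?case by simp
qed simp

lemma Lambda_eq_0:
  assumes "l \<in> Lambda N d" "1 \<le> i" "i \<le> d" "n \<le> N" "n < i"
  shows "l (i, n) = 0"
proof -
  have "l (i, n) \<le> l (i - n, 0)"
    using Lambda_diag_antimono[OF assms(1), of "i - n" n 0] assms by simp
  moreover have "l (i, 0) \<le> l (i, n)" by (rule Lambda_row_mono) (use assms in auto)
  ultimately show ?thesis using Lambda_first_col[OF assms(1)] assms by force
qed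

lemma Lambda_eq_N:
  assumes "l \<in> Lambda N d" "1 \<le> i" "i \<le> d" "n \<le> N" "N + i \<le> n + d"
  shows "l (i, n) = real N"
proof -
  have "l (i + (N - n), N) \<le> l (i, n)"
    using Lambda_diag_antimono[OF assms(1), of i "N - n" n] assms by simp
  moreover have "l (i, n) \<le> l (i, N)" by (rule Lambda_row_mono) (use assms in auto)
  ultimately show ?thesis
    using Lambda_last_col[OF assms(1), of i] Lambda_last_col[OF assms(1), of "i + (N - n)"] assms
    by force
qed

section \<open>A point in the relative interior\<close>

lemma step_between:
  fixes a b r :: "'a :: linordered_idom"
  assumes "a \<le> b" "0 \<le> r" "r \<le> 1"
  shows "a \<le> a + r * (b - a)" "a + r * (b - a) \<le> b"
  using assms mult_left_le_one_le[of "b - a" r] by simp_all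

lemma step_strictly_between:
  fixes a b r :: "'a :: linordered_idom"
  assumes "a < b"
  shows "0 < r \<Longrightarrow> a < a + r * (b - a)" "r < 1 \<Longrightarrow> a + r * (b - a) < b"
proof -
  show "0 < r \<Longrightarrow> a < a + r * (b - a)" using assms by simp
  assume "r < 1"
  hence "r * (b - a) < 1 * (b - a)" using assms by (intro mult_strict_right_mono) auto
  thus "a + r * (b - a) < b" by simp
qed

text \<open>The interior point is built column by column: each entry of column n + 1 moves the fraction
  \<open>flow_rate\<close> of the way from its value in column n towards the entry of the previous row in
  column n (row 0 is a sentinel with constant value N). With the weights d + 1 - i the gaps
  telescope, so every column sum grows by exactly d; the cap at 1 only affects saturated rows, whose gap is 0.\<close>

definition flow_rate :: "nat \<Rightarrow> nat \<Rightarrow> nat \<Rightarrow> nat \<Rightarrow> real" where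
  "flow_rate N d i n = min 1 (real (d + 1 - i) / real (N - n))"

fun flow :: "nat \<Rightarrow> nat \<Rightarrow> nat \<Rightarrow> nat \<Rightarrow> real" where
  "flow N d i 0 = (if i = 0 then real N else 0)"
| "flow N d i (Suc n) = (if i = 0 then real N
     else flow N d i n + flow_rate N d i n * (flow N d (i - 1) n - flow N d i n))"

lemma flow_rate_nonneg: "0 \<le> flow_rate N d i n"
  by (simp add: flow_rate_def)

lemma flow_rate_le_1: "flow_rate N d i n \<le> 1"
  by (simp add: flow_rate_def)

lemma flow_rate_pos: "i \<le> d \<Longrightarrow> n < N \<Longrightarrow> 0 < flow_rate N d i n"
  by (simp add: flow_rate_def)

lemma flow_rate_less_1: "d + 1 - i < N - n \<Longrightarrow> flow_rate N d i n < 1"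
  by (simp add: flow_rate_def)

lemma flow_row_0 [simp]: "flow N d 0 n = real N"
  by (cases n) auto

lemma flow_Suc_between:
  assumes "1 \<le> i" "flow N d i n \<le> flow N d (i - 1) n"
  shows "flow N d i n \<le> flow N d i (Suc n)" "flow N d i (Suc n) \<le> flow N d (i - 1) n"
  using assms step_between[OF assms(2) flow_rate_nonneg flow_rate_le_1] by simp_all

lemma flow_le_prev_row: "1 \<le> i \<Longrightarrow> flow N d i n \<le> flow N d (i - 1) n"
proof (induction n arbitrary: i)
  case (Suc n)
  have "flow N d i (Suc n) \<le> flow N d (i - 1) n"
    using flow_Suc_between(2) Suc by blast
  also have "\<dots> \<le> flow N d (i - 1) (Suc n)"
    using flow_Suc_between(1)[of "i - 1"] Suc.IH[of "i - 1"] by (cases "i = 1") auto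
  finally show ?case .
qed simp

lemma flow_mono: "flow N d i n \<le> flow N d i (Suc n)"
  using flow_Suc_between(1)[OF _ flow_le_prev_row] by (cases "i = 0") auto

lemma flow_diag_le: "1 \<le> i \<Longrightarrow> flow N d i (Suc n) \<le> flow N d (i - 1) n"
  using flow_Suc_between(2)[OF _ flow_le_prev_row] .

lemma flow_eq_0: "1 \<le> i \<Longrightarrow> n < i \<Longrightarrow> flow N d i n = 0"
proof (induction n arbitrary: i)
  case (Suc n)
  with Suc.IH[of i] Suc.IH[of "i - 1"] show ?case by simp
qed simp

lemma flow_eq_N: "i + N \<le> n + d \<Longrightarrow> n \<le> N \<Longrightarrow> d \<le> N \<Longrightarrow> flow N d i n = real N"
proof (induction n arbitrary: i)
  case (Suc n)
  show ?case
  proof (cases "i = 0 \<or> i + N \<le> n + d")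
    case True
    with Suc.IH[of i] Suc.IH[of "i - 1"] Suc.prems show ?thesis by auto
  next
    case False
    hence "flow_rate N d i n = 1" using Suc.prems by (simp add: flow_rate_def)
    with False Suc.IH[of "i - 1"] Suc.prems show ?thesis by simp
  qed
qed simp

lemma sum_weighted_differences:
  "(\<Sum>i=1..k. real (k + 1 - i) * (f (i - 1) - f i)) = real k * f 0 - (\<Sum>i=1..k. f i :: real)"
proof (induction k)
  case (Suc k)
  have "(\<Sum>i=1..Suc k. real (Suc k + 1 - i) * (f (i - 1) - f i))
      = (\<Sum>i=1..Suc k. real (k + 1 - i) * (f (i - 1) - f i)) + (\<Sum>i=1..Suc k. f (i - 1) - f i)"
    by (subst sum.distrib[symmetric], rule sum.cong) (auto simp: of_nat_diff algebra_simps)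
  also have "(\<Sum>i=1..Suc k. f (i - 1) - f i) = f 0 - f (Suc k)"
    using sum_telescope''[of 0 "Suc k" "\<lambda>i. - f i"] by simp
  finally show ?case using Suc.IH by (simp add: algebra_simps)
qed simp

lemma sum_flow: "d \<le> N \<Longrightarrow> n \<le> N \<Longrightarrow> (\<Sum>i=1..d. flow N d i n) = real d * real n"
proof (induction n)
  case (Suc n)
  let ?gap = "\<lambda>i. flow N d (i - 1) n - flow N d i n"
  have "flow_rate N d i n * ?gap i = real (d + 1 - i) * ?gap i / real (N - n)" if "i \<in> {1..d}" for i
  proof (cases "i + N \<le> n + d")
    case True
    thus ?thesis using flow_eq_N[of i N n d] flow_eq_N[of "i - 1" N n d] Suc.prems by simp
  next
    case False
    thus ?thesis using that by (simp add: flow_rate_def)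
  qed
  hence "(\<Sum>i=1..d. flow_rate N d i n * ?gap i)
      = (\<Sum>i=1..d. real (d + 1 - i) * ?gap i) / real (N - n)"
    by (simp add: sum_divide_distrib)
  also have "\<dots> = real d"
    using Suc sum_weighted_differences[of d "\<lambda>i. flow N d i n"]
    by (simp add: of_nat_diff field_simps)
  finally have "(\<Sum>i=1..d. flow_rate N d i n * ?gap i) = real d" .
  moreover have "(\<Sum>i=1..d. flow N d i (Suc n))
      = (\<Sum>i=1..d. flow N d i n) + (\<Sum>i=1..d. flow_rate N d i n * ?gap i)"
    by (subst sum.distrib[symmetric]) (rule sum.cong; simp)
  ultimately show ?case using Suc by (simp add: algebra_simps)
qed simp

lemma flow_less_prev_row:
  "1 \<le> i \<Longrightarrow> i \<le> d \<Longrightarrow> i \<le> Suc n \<Longrightarrow> n + d < N + i \<Longrightarrow> flow N d i n < flow N d (i - 1) n"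
proof (induction n arbitrary: i)
  case (Suc n)
  show ?case
  proof (cases "i \<le> Suc n")
    case True
    have "flow N d i (Suc n) < flow N d (i - 1) n"
      using step_strictly_between(2)[OF Suc.IH[of i] flow_rate_less_1] Suc.prems True by simp
    also have "\<dots> \<le> flow N d (i - 1) (Suc n)" by (rule flow_mono)
    finally show ?thesis .
  next
    case False
    hence "flow N d (i - 1) n < flow N d (i - 1) (Suc n)"
      using step_strictly_between(1)[OF Suc.IH[of "i - 1"] flow_rate_pos] Suc.prems by simp
    with flow_diag_le[of i N d n] Suc.prems show ?thesis by simp
  qed
qed simp

lemma flow_mono_strict:
  "1 \<le> i \<Longrightarrow> i \<le> d \<Longrightarrow> i \<le> Suc n \<Longrightarrow> n + d < N + i \<Longrightarrow> flow N d i n < flow N d i (Suc n)"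
  using step_strictly_between(1)[OF flow_less_prev_row flow_rate_pos] by simp

lemma flow_diag_less:
  "2 \<le> i \<Longrightarrow> i \<le> d \<Longrightarrow> i \<le> Suc n \<Longrightarrow> Suc n + d < N + i \<Longrightarrow> flow N d i (Suc n) < flow N d (i - 1) n"
  using step_strictly_between(2)[OF flow_less_prev_row flow_rate_less_1] by simp

section \<open>The tangent space and a basis of it\<close>

definition free_cells :: "nat \<Rightarrow> nat \<Rightarrow> (nat \<times> nat) set" where
  "free_cells N d = {(i, n). 1 \<le> i \<and> i \<le> d \<and> i \<le> n \<and> n + d < N + i}"

definition tangent_space :: "nat \<Rightarrow> nat \<Rightarrow> mat set" where
  "tangent_space N d = {x. (\<forall>p. p \<notin> free_cells N d \<longrightarrow> x p = 0) \<and> (\<forall>n. (\<Sum>i=1..d. x (i, n)) = 0)}"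

lemma finite_free_cells: "finite (free_cells N d)"
  by (rule finite_subset[of _ "{..d} \<times> {..N + d}"]) (auto simp: free_cells_def)

lemma tangent_spaceD:
  assumes "x \<in> tangent_space N d"
  shows "p \<notin> free_cells N d \<Longrightarrow> x p = 0" "(\<Sum>i=1..d. x (i, n)) = 0"
  using assms unfolding tangent_space_def by blast+

lemma subspace_tangent_space: "M.subspace (tangent_space N d)"
  unfolding M.subspace_def tangent_space_def
  by (auto simp: mscale_def sum.distrib sum_distrib_left[symmetric])

lemma Lambda_diff_in_tangent_space:
  assumes l: "l \<in> Lambda N d" and a: "a \<in> Lambda N d"
  shows "l - a \<in> tangent_space N d"
proof -
  have "l p = a p" if not_free: "p \<notin> free_cells N d" for p
  proof -
    obtain i n where p: "p = (i, n)" by (cases p)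
    consider "\<not> (1 \<le> i \<and> i \<le> d \<and> n \<le> N)" | "1 \<le> i" "i \<le> d" "n \<le> N" "n < i"
      | "1 \<le> i" "i \<le> d" "n \<le> N" "N + i \<le> n + d"
      using not_free p by (force simp: free_cells_def)
    thus ?thesis
      by cases (auto simp: p Lambda_outside[OF l] Lambda_outside[OF a]
                  Lambda_eq_0[OF l] Lambda_eq_0[OF a] Lambda_eq_N[OF l] Lambda_eq_N[OF a])
  qed
  moreover have "(\<Sum>i=1..d. l (i, n)) = (\<Sum>i=1..d. a (i, n))" for n
    using Lambda_col_sum[OF l, of n] Lambda_col_sum[OF a, of n]
    by (cases "n \<le> N") (simp_all add: Lambda_outside[OF l] Lambda_outside[OF a])
  ultimately show ?thesis by (simp add: tangent_space_def sum_subtractf)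
qed

definition pivot_row :: "nat \<Rightarrow> nat \<Rightarrow> nat \<Rightarrow> nat" where
  "pivot_row N d n = max 1 (n + d + 1 - N)"

definition basis_cells :: "nat \<Rightarrow> nat \<Rightarrow> (nat \<times> nat) set" where
  "basis_cells N d = {(i, n). 2 \<le> i \<and> i \<le> d \<and> i \<le> n \<and> n + d + 1 < N + i}"

definition basis_vec :: "nat \<Rightarrow> nat \<Rightarrow> nat \<times> nat \<Rightarrow> mat" where
  "basis_vec N d g =
     (\<lambda>p. (if p = g then 1 else 0) - (if p = (pivot_row N d (snd g), snd g) then 1 else 0))"

lemma pivot_row_less: "(i, n) \<in> basis_cells N d \<Longrightarrow> pivot_row N d n < i"
  by (auto simp: basis_cells_def pivot_row_def)

lemma basis_cells_subset_free_cells: "basis_cells N d \<subseteq> free_cells N d"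
  by (auto simp: basis_cells_def free_cells_def)

lemma pivot_cell_free: "(i, n) \<in> basis_cells N d \<Longrightarrow> (pivot_row N d n, n) \<in> free_cells N d"
  by (auto simp: basis_cells_def free_cells_def pivot_row_def)

lemma free_cell_eq_pivot_row:
  "(i, n) \<in> free_cells N d \<Longrightarrow> (i, n) \<notin> basis_cells N d \<Longrightarrow> i = pivot_row N d n"
  by (auto simp: basis_cells_def free_cells_def pivot_row_def)

lemma finite_basis_cells: "finite (basis_cells N d)"
  using finite_free_cells basis_cells_subset_free_cells by (rule finite_subset[rotated])

lemma card_basis_cells: "card (basis_cells N d) = (d - 1) * (N - d - 1)"
proof -
  have "basis_cells N d = (SIGMA i:{2..d}. {i..<N + i - d - 1})"
    by (auto simp: basis_cells_def)
  thus ?thesis by (simp add: card_SigmaI)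
qed

lemma basis_vec_at_basis_cell:
  "g \<in> basis_cells N d \<Longrightarrow> p \<in> basis_cells N d \<Longrightarrow> basis_vec N d g p = (if g = p then 1 else 0)"
  using pivot_row_less[of "fst p" "snd p" N d] by (cases p) (auto simp: basis_vec_def)

lemma inj_on_basis_vec: "inj_on (basis_vec N d) (basis_cells N d)"
proof (rule inj_onI)
  fix g h assume "g \<in> basis_cells N d" "h \<in> basis_cells N d" "basis_vec N d g = basis_vec N d h"
  thus "g = h" using basis_vec_at_basis_cell[of _ N d h] by (metis one_neq_zero)
qed

lemma basis_vec_in_tangent_space:
  assumes g: "g \<in> basis_cells N d"
  shows "basis_vec N d g \<in> tangent_space N d"
proof -
  obtain i m where gim: "g = (i, m)" by (cases g)
  have rows: "1 \<le> i" "i \<le> d" "1 \<le> pivot_row N d m" "pivot_row N d m \<le> d"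
    using g pivot_cell_free[of i m N d] by (auto simp: gim basis_cells_def free_cells_def)
  have "(\<Sum>j=1..d. basis_vec N d g (j, n)) = 0" for n
    using rows by (cases "n = m") (simp_all add: basis_vec_def gim sum_subtractf)
  moreover have "basis_vec N d g p = 0" if "p \<notin> free_cells N d" for p
    using that g basis_cells_subset_free_cells pivot_cell_free[of i m N d]
    by (auto simp: basis_vec_def gim)
  ultimately show ?thesis by (simp add: tangent_space_def)
qed

lemma independent_basis_vecs: "M.independent (basis_vec N d ` basis_cells N d)"
proof (rule M.independent_if_scalars_zero)
  fix f v
  assume sum0: "(\<Sum>w\<in>basis_vec N d ` basis_cells N d. mscale (f w) w) = 0"
    and "v \<in> basis_vec N d ` basis_cells N d"
  then obtain g where g: "g \<in> basis_cells N d" "v = basis_vec N d g" by auto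
  have "0 = (\<Sum>w\<in>basis_vec N d ` basis_cells N d. mscale (f w) w) g" using sum0 by simp
  also have "\<dots> = (\<Sum>h\<in>basis_cells N d. f (basis_vec N d h) * basis_vec N d h g)"
    by (simp add: sum_fun_apply mscale_def sum.reindex inj_on_basis_vec)
  also have "\<dots> = f v"
    using g finite_basis_cells by (simp add: basis_vec_at_basis_cell if_distrib cong: if_cong)
  finally show "f v = 0" by simp
qed (simp add: finite_basis_cells)

lemma tangent_space_eq_0:
  assumes x: "x \<in> tangent_space N d" and "\<And>g. g \<in> basis_cells N d \<Longrightarrow> x g = 0"
  shows "x = 0"
proof
  fix p
  show "x p = 0 p"
  proof (cases "p \<in> free_cells N d - basis_cells N d")
    case True
    then obtain i n where p: "p = (i, n)" and i: "i = pivot_row N d n" "i \<in> {1..d}"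
      using free_cell_eq_pivot_row by (cases p) (auto simp: free_cells_def)
    have "x (j, n) = 0" if "j \<noteq> i" for j
      using that i assms tangent_spaceD(1)[OF x] free_cell_eq_pivot_row[of j n N d] by metis
    hence "(\<Sum>j=1..d. x (j, n)) = (\<Sum>j=1..d. if j = i then x (i, n) else 0)"
      by (intro sum.cong) auto
    also have "\<dots> = x (i, n)" using i by simp
    finally show ?thesis using tangent_spaceD(2)[OF x, of n] p by simp
  qed (use assms tangent_spaceD(1)[OF x] in \<open>simp, blast\<close>)
qed

lemma tangent_space_subset_span: "tangent_space N d \<subseteq> M.span (basis_vec N d ` basis_cells N d)"
proof
  fix x assume x: "x \<in> tangent_space N d"
  define y where "y = (\<Sum>g\<in>basis_cells N d. mscale (x g) (basis_vec N d g))"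
  have "y \<in> tangent_space N d"
    unfolding y_def using basis_vec_in_tangent_space
    by (intro M.subspace_sum[OF subspace_tangent_space] M.subspace_scale[OF subspace_tangent_space])
  hence "x - y \<in> tangent_space N d"
    using x by (rule M.subspace_diff[OF subspace_tangent_space, rotated])
  moreover have "y g = x g" if "g \<in> basis_cells N d" for g
    using that finite_basis_cells
    by (simp add: y_def sum_fun_apply mscale_def basis_vec_at_basis_cell if_distrib cong: if_cong)
  ultimately have "x = y" using tangent_space_eq_0[of "x - y"] by (simp add: fun_eq_iff)
  moreover have "y \<in> M.span (basis_vec N d ` basis_cells N d)"
    unfolding y_def by (intro M.span_sum M.span_scale M.span_base) auto
  ultimately show "x \<in> M.span (basis_vec N d ` basis_cells N d)" by simp
qed

lemma dim_tangent_space: "M.dim (tangent_space N d) = (d - 1) * (N - d - 1)"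
  by (rule M.dim_unique[OF _ tangent_space_subset_span independent_basis_vecs])
    (auto simp: basis_vec_in_tangent_space card_image inj_on_basis_vec card_basis_cells)

section \<open>Moving the interior point along the tangent space\<close>

lemma flow_slack:
  obtains \<delta> :: real where "0 < \<delta>"
    and "\<And>i n. (i, n) \<in> free_cells N d \<or> (i, Suc n) \<in> free_cells N d \<Longrightarrow>
           flow N d i n + \<delta> \<le> flow N d i (Suc n)"
    and "\<And>i n. 2 \<le> i \<Longrightarrow> i \<le> d \<Longrightarrow>
           (i, Suc n) \<in> free_cells N d \<or> (i - 1, n) \<in> free_cells N d \<Longrightarrow>
           flow N d i (Suc n) + \<delta> \<le> flow N d (i - 1) n"
proof -
  define R where "R = {(i, n). (i, n) \<in> free_cells N d \<or> (i, Suc n) \<in> free_cells N d}"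
  define D where "D = {(i, n). 2 \<le> i \<and> i \<le> d \<and>
    ((i, Suc n) \<in> free_cells N d \<or> (i - 1, n) \<in> free_cells N d)}"
  define gaps where "gaps = (\<lambda>(i, n). flow N d i (Suc n) - flow N d i n) ` R
    \<union> (\<lambda>(i, n). flow N d (i - 1) n - flow N d i (Suc n)) ` D"
  have "finite R" "finite D"
    by (rule finite_subset[of _ "{..d} \<times> {..N + d}"], auto simp: R_def D_def free_cells_def)+
  hence "finite gaps" by (simp add: gaps_def)
  have R_pos: "flow N d i n < flow N d i (Suc n)" if "(i, n) \<in> R" for i n
    by (rule flow_mono_strict) (use that in \<open>auto simp: R_def free_cells_def\<close>)
  have D_pos: "flow N d i (Suc n) < flow N d (i - 1) n" if "(i, n) \<in> D" for i n
    by (rule flow_diag_less) (use that in \<open>auto simp: D_def free_cells_def\<close>)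
  have R_gap: "flow N d i (Suc n) - flow N d i n \<in> gaps" if "(i, n) \<in> R" for i n
    unfolding gaps_def using that
    by (intro UnI1 rev_image_eqI[of "(i, n)"]) (simp_all del: flow.simps)
  have D_gap: "flow N d (i - 1) n - flow N d i (Suc n) \<in> gaps" if "(i, n) \<in> D" for i n
    unfolding gaps_def using that
    by (intro UnI2 rev_image_eqI[of "(i, n)"]) (simp_all del: flow.simps)
  have "0 < g" if "g \<in> gaps" for g
    using that R_pos D_pos by (auto simp: gaps_def simp del: flow.simps)
  hence "0 < Min (insert 1 gaps)" using \<open>finite gaps\<close> by simp
  moreover have "Min (insert 1 gaps) \<le> g" if "g \<in> gaps" for g
    using \<open>finite gaps\<close> that by simp
  ultimately show thesis
    using R_gap D_gap
    by (intro that[of "Min (insert 1 gaps)"]) (force simp: R_def D_def simp del: flow.simps)+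
qed

definition interior_matrix :: "nat \<Rightarrow> nat \<Rightarrow> mat" where
  "interior_matrix N d = (\<lambda>(i, n). if 1 \<le> i \<and> i \<le> d \<and> n \<le> N then flow N d i n else 0)"

lemma tangent_space_bounded:
  assumes "x \<in> tangent_space N d"
  obtains C where "0 < C" "\<And>p. \<bar>x p\<bar> \<le> C"
proof
  let ?C = "1 + (\<Sum>q\<in>free_cells N d. \<bar>x q\<bar>)"
  show "0 < ?C" by (simp add: add_pos_nonneg sum_nonneg)
  fix p
  have "\<bar>x p\<bar> \<le> (\<Sum>q\<in>free_cells N d. \<bar>x q\<bar>)"
    using tangent_spaceD(1)[OF assms, of p] finite_free_cells
    by (cases "p \<in> free_cells N d") (auto intro: member_le_sum simp: sum_nonneg)
  thus "\<bar>x p\<bar> \<le> ?C" by simp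
qed

lemma interior_matrix_add_in_Lambda:
  assumes dN: "d \<le> N" and x: "x \<in> tangent_space N d"
    and row: "\<And>i n. (i, n) \<in> free_cells N d \<or> (i, Suc n) \<in> free_cells N d \<Longrightarrow>
      x (i, n) - x (i, Suc n) \<le> flow N d i (Suc n) - flow N d i n"
    and diag: "\<And>i n. 2 \<le> i \<Longrightarrow> i \<le> d \<Longrightarrow>
      (i, Suc n) \<in> free_cells N d \<or> (i - 1, n) \<in> free_cells N d \<Longrightarrow>
      x (i, Suc n) - x (i - 1, n) \<le> flow N d (i - 1) n - flow N d i (Suc n)"
  shows "interior_matrix N d + x \<in> Lambda N d"
  unfolding Lambda_def mem_Collect_eq plus_fun_apply interior_matrix_def case_prod_conv
proof (intro conjI allI impI)
  have x0: "x p = 0" if "p \<notin> free_cells N d" for p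
    using tangent_spaceD(1)[OF x that] .
  {
    fix i n assume out: "\<not> (1 \<le> i \<and> i \<le> d \<and> n \<le> N)"
    hence "(i, n) \<notin> free_cells N d" by (auto simp: free_cells_def)
    with out show "(if 1 \<le> i \<and> i \<le> d \<and> n \<le> N then flow N d i n else 0) + x (i, n) = 0"
      using x0 by auto
  next
    fix i :: nat assume "1 \<le> i \<and> i \<le> d"
    thus "(if 1 \<le> i \<and> i \<le> d \<and> 0 \<le> N then flow N d i 0 else 0) + x (i, 0) = 0"
      using x0[of "(i, 0)"] by (simp add: free_cells_def)
  next
    fix i :: nat assume "1 \<le> i \<and> i \<le> d"
    thus "(if 1 \<le> i \<and> i \<le> d \<and> N \<le> N then flow N d i N else 0) + x (i, N) = real N"
      using x0[of "(i, N)"] flow_eq_N[of i N N d] dN by (simp add: free_cells_def)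
  next
    fix i n assume "1 \<le> i \<and> i \<le> d \<and> n < N"
    thus "(if 1 \<le> i \<and> i \<le> d \<and> n \<le> N then flow N d i n else 0) + x (i, n)
        \<le> (if 1 \<le> i \<and> i \<le> d \<and> Suc n \<le> N then flow N d i (Suc n) else 0) + x (i, Suc n)"
      using row[of i n] flow_mono[of N d i n] x0[of "(i, n)"] x0[of "(i, Suc n)"]
      by (cases "(i, n) \<in> free_cells N d \<or> (i, Suc n) \<in> free_cells N d") (auto simp del: flow.simps)
  next
    fix i n assume "1 < i \<and> i \<le> d \<and> 0 < n \<and> n \<le> N"
    then obtain m where "n = Suc m" "2 \<le> i" "i \<le> d" "m < N" by (cases n) auto
    thus "(if 1 \<le> i \<and> i \<le> d \<and> n \<le> N then flow N d i n else 0) + x (i, n)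
        \<le> (if 1 \<le> i - 1 \<and> i - 1 \<le> d \<and> n - 1 \<le> N then flow N d (i - 1) (n - 1) else 0)
            + x (i - 1, n - 1)"
      using diag[of i m] flow_diag_le[of i N d m] x0[of "(i, n)"] x0[of "(i - 1, m)"]
      by (cases "(i, n) \<in> free_cells N d \<or> (i - 1, m) \<in> free_cells N d") (auto simp del: flow.simps)
  }
qed (use sum_flow[OF dN] tangent_spaceD(2)[OF x] in \<open>simp add: sum.distrib\<close>)

lemma interior_matrix_perturb:
  assumes dN: "d \<le> N" and x: "x \<in> tangent_space N d"
  shows "\<exists>\<epsilon>>0. interior_matrix N d + mscale \<epsilon> x \<in> Lambda N d"
proof -
  obtain \<delta> :: real where \<delta>: "0 < \<delta>"
    and row_slack: "\<And>i n. (i, n) \<in> free_cells N d \<or> (i, Suc n) \<in> free_cells N d \<Longrightarrow>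
      flow N d i n + \<delta> \<le> flow N d i (Suc n)"
    and diag_slack: "\<And>i n. 2 \<le> i \<Longrightarrow> i \<le> d \<Longrightarrow>
      (i, Suc n) \<in> free_cells N d \<or> (i - 1, n) \<in> free_cells N d \<Longrightarrow> flow N d i (Suc n) + \<delta> \<le> flow N d (i - 1) n"
    using flow_slack[of N d] by blast
  obtain C where C: "0 < C" "\<And>p. \<bar>x p\<bar> \<le> C"
    using tangent_space_bounded[OF x] by blast
  define \<epsilon> where "\<epsilon> = \<delta> / (2 * C)"
  have "0 < \<epsilon>" using \<delta> C by (simp add: \<epsilon>_def)
  have small: "\<bar>\<epsilon> * x p\<bar> \<le> \<delta> / 2" for p
  proof -
    have "\<bar>\<epsilon> * x p\<bar> \<le> \<epsilon> * C"
      using C(2)[of p] \<open>0 < \<epsilon>\<close> by (simp add: abs_mult mult_left_mono)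
    thus ?thesis using C by (simp add: \<epsilon>_def)
  qed
  have "interior_matrix N d + mscale \<epsilon> x \<in> Lambda N d"
  proof (rule interior_matrix_add_in_Lambda[OF dN])
    show "mscale \<epsilon> x \<in> tangent_space N d"
      using x by (rule M.subspace_scale[OF subspace_tangent_space])
  next
    fix i n assume "(i, n) \<in> free_cells N d \<or> (i, Suc n) \<in> free_cells N d"
    with row_slack[of i n] small[of "(i, n)"] small[of "(i, Suc n)"]
    show "mscale \<epsilon> x (i, n) - mscale \<epsilon> x (i, Suc n) \<le> flow N d i (Suc n) - flow N d i n"
      by (simp add: mscale_def del: flow.simps)
  next
    fix i n assume "2 \<le> i" "i \<le> d" "(i, Suc n) \<in> free_cells N d \<or> (i - 1, n) \<in> free_cells N d"
    with diag_slack[of i n] small[of "(i, Suc n)"] small[of "(i - 1, n)"]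
    show "mscale \<epsilon> x (i, Suc n) - mscale \<epsilon> x (i - 1, n) \<le> flow N d (i - 1) n - flow N d i (Suc n)"
      by (simp add: mscale_def del: flow.simps)
  qed
  with \<open>0 < \<epsilon>\<close> show ?thesis by blast
qed

lemma interior_matrix_in_Lambda: "d \<le> N \<Longrightarrow> interior_matrix N d \<in> Lambda N d"
  using interior_matrix_perturb[of d N 0] M.subspace_0[OF subspace_tangent_space]
  by (simp add: mscale_def flip: zero_fun_def)

theorem theorem3p2:
  fixes N d :: nat
  assumes "d \<le> N"
  shows "affine_dim (Lambda N d) =
           (if d = 0 \<or> d = N then 0 else (int d - 1) * (int N - int d - 1))"
proof -
  let ?L = "Lambda N d"
  have "tangent_space N d \<subseteq> M.span {x - y | x y. x \<in> ?L \<and> y \<in> ?L}"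
  proof
    fix x assume "x \<in> tangent_space N d"
    then obtain \<epsilon> where "0 < \<epsilon>" and moved: "interior_matrix N d + mscale \<epsilon> x \<in> ?L"
      using interior_matrix_perturb[OF assms] by blast
    hence "(interior_matrix N d + mscale \<epsilon> x) - interior_matrix N d
        \<in> {x - y | x y. x \<in> ?L \<and> y \<in> ?L}"
      using interior_matrix_in_Lambda[OF assms] by blast
    hence "mscale (1 / \<epsilon>) (mscale \<epsilon> x) \<in> M.span {x - y | x y. x \<in> ?L \<and> y \<in> ?L}"
      by (intro M.span_scale M.span_base) simp
    thus "x \<in> M.span {x - y | x y. x \<in> ?L \<and> y \<in> ?L}"
      using \<open>0 < \<epsilon>\<close> by (simp add: mscale_def)
  qed
  hence "affine_dim ?L = int (M.dim (tangent_space N d))"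
    using interior_matrix_in_Lambda[OF assms] Lambda_diff_in_tangent_space
    by (intro affine_dim_eq_dim) auto
  thus ?thesis using assms by (auto simp: dim_tangent_space of_nat_diff)
qed

end
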